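(* Let $H\in\mathbb{R}^{n\times d}$ have rank $h$, let $\Sigma\in\mathbb{R}^{n\times n}$ be symmetric positive definite, let $y\in\mathbb{R}^n$, $J\ge2$, and let $v_0^{(1)},\dots,v_0^{(J)}\in\mathbb{R}^d$ be an initial ensemble. Run deterministic EKI: $$v_{i+1}^{(j)}=v_i^{(j)}+\Gamma_iH^\top(H\Gamma_iH^\top+\Sigma)^{-1}(y-Hv_i^{(j)}),$$ where $\Gamma_i$ is the empirical covariance of the ensemble at step $i$. Let $v^*=(H^\top\Sigma^{-1}H)^\dagger H^\top\Sigma^{-1}y$ and $\omega_i^{(j)}=v_i^{(j)}-v^*$, and let $\mathbb{P},\mathbb{Q},\mathbb{N}$ be the projectors defined in the context. Then for every particle $j=1,\dots,J$: (a) $\|\mathbb{P}\omega_i^{(j)}\|=\mathcal{O}(i^{-1/2})$ as $i\to\infty$; (b) $\mathbb{Q}\omega_i^{(j)}=\mathbb{Q}\omega_0^{(j)}$ for all $i\ge0$; (c) $\mathbb{N}\omega_i^{(j)}=\mathbb{N}\omega_0^{(j)}$ for all $i\ge0$.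
   Context: $\dagger$ is the Moore–Penrose pseudoinverse; $H^+:=(H^\top\Sigma^{-1}H)^\dagger H^\top\Sigma^{-1}$. Empirical covariance: $\Gamma_i=\frac{1}{J-1}\sum_{j}(v_i^{(j)}-\bar v_i)(v_i^{(j)}-\bar v_i)^\top$, $\bar v_i=\frac1J\sum_jv_i^{(j)}$. Let $r$ be the number of positive eigenvalues of the pencil $H\Gamma_0H^\top w=\delta\Sigma w$. Let $w_1,\dots,w_n$ be a basis of $\mathbb{R}^n$ with $w_k^\top\Sigma w_l$ equal to $1$ if $k=l$ and $0$ otherwise, such that each $w_\ell$ is a generalized eigenvector of $(H\Gamma_iH^\top,\Sigma)$ for every $i\ge0$ (with eigenvalue $\delta_{\ell,i}$); $w_1,\dots,w_r\in\mathsf{Ran}(\Sigma^{-1}H)$ correspond to positive eigenvalues; $w_{r+1},\dots,w_h\in\mathsf{Ran}(\Sigma^{-1}H)$ correspond to eigenvalue zero; $w_{h+1},\dots,w_n$ form a basis of $\mathsf{Ker}(H^\top)$. Define $u_\ell=\frac{1}{\delta_{\ell,0}}\Gamma_0H^\top w_\ell$ for $\ell\le r$ and $u_\ell=H^+\Sigma w_\ell$ for $r<\ell\le h$; let $U=[u_1,\dots,u_h]$, $U_{k:l}$ its columns $k$ through $l$. Define $\mathbb{P}=U_{1:r}U_{1:r}^\top H^\top\Sigma^{-1}H$, $\mathbb{Q}=U_{r+1:h}U_{r+1:h}^\top H^\top\Sigma^{-1}H$, $\mathbb{N}=I-\mathbb{P}-\mathbb{Q}$. *)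

theory Defs
  imports "HOL-Analysis.Analysis" "HOL-Library.Landau_Symbols"
begin

definition outer :: "real^'m \<Rightarrow> real^'k \<Rightarrow> real^'k^'m" where
  "outer x z = (\<chi> a b. x $ a * z $ b)"

definition pinv :: "real^'k^'m \<Rightarrow> real^'m^'k" where
  "pinv A = (THE X. A ** X ** A = A \<and> X ** A ** X = X \<and>
                    transpose (A ** X) = A ** X \<and> transpose (X ** A) = X ** A)"

definition sym_posdef :: "real^'n^'n \<Rightarrow> bool" where
  "sym_posdef S \<longleftrightarrow> transpose S = S \<and> (\<forall>x. x \<noteq> 0 \<longrightarrow> x \<bullet> (S *v x) > 0)"

definition ens_mean :: "nat \<Rightarrow> (nat \<Rightarrow> real^'d) \<Rightarrow> real^'d" where
  "ens_mean J v = (1 / real J) *\<^sub>R (\<Sum>j\<in>{1..J}. v j)"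

definition emp_cov :: "nat \<Rightarrow> (nat \<Rightarrow> real^'d) \<Rightarrow> real^'d^'d" where
  "emp_cov J v = (1 / (real J - 1)) *\<^sub>R
     (\<Sum>j\<in>{1..J}. outer (v j - ens_mean J v) (v j - ens_mean J v))"

definition Hplus :: "real^'d^'n \<Rightarrow> real^'n^'n \<Rightarrow> real^'n^'d" where
  "Hplus H S = pinv (transpose H ** matrix_inv S ** H) ** transpose H ** matrix_inv S"

end

theory Submission
  imports Defs
begin

text \<open>The Kalman gain \<open>L\<^sub>i = \<Gamma>\<^sub>i H\<^sup>T (H \<Gamma>\<^sub>i H\<^sup>T + \<Sigma>)\<^sup>-\<^sup>1 H\<close> maps the error
  \<open>\<omega> = v - v\<^sup>*\<close> to \<open>\<omega> - L\<^sub>i \<omega>\<close>, because the residual \<open>y - H v\<^sup>*\<close> is \<open>\<Sigma>\<close>-orthogonal to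
  the range of \<open>H\<close>. In the \<open>\<Sigma>\<close>-orthonormal eigenbasis the coordinate \<open>w\<^sub>l\<^sup>T H \<omega>\<close> is divided
  by \<open>1 + \<delta>\<^sub>l\<^sub>,\<^sub>i\<close> in every step; as the whole ensemble moves by the same affine map,
  \<open>\<Gamma>\<^sub>i\<^sub>+\<^sub>1 H\<^sup>T w\<^sub>l = \<Gamma>\<^sub>i H\<^sup>T w\<^sub>l / (1 + \<delta>\<^sub>l\<^sub>,\<^sub>i)\<^sup>2\<close>. Hence \<open>\<delta>\<^sub>l\<^sub>,\<^sub>i = p\<^sub>l\<^sub>,\<^sub>i\<^sup>2 \<delta>\<^sub>l\<^sub>,\<^sub>0\<close>
  for the accumulated damping \<open>p\<^sub>l\<^sub>,\<^sub>i = \<Prod>\<^sub>k\<^sub><\<^sub>i 1 / (1 + \<delta>\<^sub>l\<^sub>,\<^sub>k)\<close>, which therefore obeys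
  \<open>p\<^sub>l\<^sub>,\<^sub>i\<^sub>+\<^sub>1 = p\<^sub>l\<^sub>,\<^sub>i / (1 + \<delta>\<^sub>l\<^sub>,\<^sub>0 p\<^sub>l\<^sub>,\<^sub>i\<^sup>2)\<close> and so \<open>p\<^sub>l\<^sub>,\<^sub>i\<^sup>2 \<le> 1 / (1 + 2 \<delta>\<^sub>l\<^sub>,\<^sub>0 i)\<close>.
  Since \<open>\<bbbP> \<omega> = \<Sum>\<^sub>l\<^sub>\<le>\<^sub>r (w\<^sub>l\<^sup>T H \<omega>) u\<^sub>l\<close>, this is the \<open>O(i\<^sup>-\<^sup>1\<^sup>/\<^sup>2)\<close> decay. For \<open>r < l \<le> h\<close>
  the eigenvalue stays \<open>0\<close> and the coordinate never moves, while the increment \<open>L\<^sub>i \<omega>\<close> lies in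
  the span of \<open>u\<^sub>1, \<dots>, u\<^sub>r\<close>, on which \<open>\<bbbP>\<close> is the identity and \<open>\<bbbQ>\<close> vanishes; so \<open>\<bbbQ> \<omega>\<close>
  and \<open>(I - \<bbbP> - \<bbbQ>) \<omega>\<close> are constant.\<close>

section \<open>Matrices and inner products\<close>

declare transpose_matrix_vector [simp del]

lemma transpose_mv_inner: "(transpose A *v x) \<bullet> y = x \<bullet> ((A::real^'a^'b) *v y)"
  by (simp add: transpose_matrix_vector dot_lmul_matrix)

lemma symmetric_mv_inner:
  "transpose S = S \<Longrightarrow> (S *v x) \<bullet> y = x \<bullet> ((S::real^'a^'a) *v y)"
  by (metis transpose_mv_inner)

lemma transpose_matrix_add: "transpose (A + B) = transpose A + transpose (B::real^'a^'b)"
  by (simp add: vec_eq_iff transpose_def)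

lemma sum_matrix_vector_mult: "(\<Sum>l\<in>S. f l) *v (x::real^'a) = (\<Sum>l\<in>S. f l *v x)"
  by (induction S rule: infinite_finite_induct) (auto simp: matrix_vector_mult_add_rdistrib)

lemma matrix_vector_mult_sum: "(A::real^'a^'b) *v (\<Sum>l\<in>S. f l) = (\<Sum>l\<in>S. A *v f l)"
  by (rule linear_sum[OF matrix_vector_mul_linear])

lemma outer_mv: "outer a b *v x = (b \<bullet> x) *\<^sub>R a"
  by (simp add: outer_def matrix_vector_mult_def vec_eq_iff inner_vec_def sum_distrib_left
      mult.commute mult.left_commute)

lemma matrix_inv_cancel:
  fixes S :: "real^'n^'n"
  assumes "invertible S"
  shows matrix_inv_right: "S ** matrix_inv S = mat 1"
    and matrix_inv_left: "matrix_inv S ** S = mat 1"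
proof -
  have "\<exists>S'. S ** S' = mat 1 \<and> S' ** S = mat 1"
    using assms invertible_def by blast
  then have "S ** matrix_inv S = mat 1 \<and> matrix_inv S ** S = mat 1"
    unfolding matrix_inv_def by (rule someI_ex)
  then show "S ** matrix_inv S = mat 1" "matrix_inv S ** S = mat 1"
    by auto
qed

lemma matrix_inv_mv_cancel:
  fixes S :: "real^'n^'n"
  assumes "invertible S"
  shows "S *v (matrix_inv S *v x) = x" "matrix_inv S *v (S *v x) = x"
  using matrix_inv_cancel[OF assms] by (simp_all add: matrix_vector_mul_assoc)

lemma invertible_if_trivial_kernel:
  fixes S :: "real^'n^'n"
  assumes "\<And>x. S *v x = 0 \<Longrightarrow> x = 0"
  shows "invertible S"
  using assms matrix_left_invertible_ker invertible_left_inverse by blast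

lemma invertible_if_posdef:
  fixes S :: "real^'n^'n"
  assumes "\<And>x. x \<noteq> 0 \<Longrightarrow> x \<bullet> (S *v x) > 0"
  shows "invertible S"
  by (rule invertible_if_trivial_kernel) (metis assms inner_zero_right less_irrefl)

lemma transpose_matrix_inv_sym:
  fixes S :: "real^'n^'n"
  assumes "invertible S" "transpose S = S"
  shows "transpose (matrix_inv S) = matrix_inv S"
proof -
  have "transpose (matrix_inv S) = transpose (matrix_inv S) ** (S ** matrix_inv S)"
    using matrix_inv_right[OF assms(1)] by simp
  also have "\<dots> = transpose (S ** matrix_inv S) ** matrix_inv S"
    by (simp add: assms(2) matrix_transpose_mul matrix_mul_assoc)
  also have "\<dots> = matrix_inv S"
    using matrix_inv_right[OF assms(1)] by simp
  finally show ?thesis .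
qed

lemma sigma_orthonormal_basis:
  fixes S :: "real^'n^'n" and w :: "nat \<Rightarrow> real^'n"
  assumes orth: "\<And>k l. k \<in> {1..CARD('n)} \<Longrightarrow> l \<in> {1..CARD('n)} \<Longrightarrow>
      w k \<bullet> (S *v w l) = (if k = l then 1 else 0)"
  shows "inj_on w {1..CARD('n)}" and "span (w ` {1..CARD('n)}) = UNIV"
proof -
  let ?N = "{1..CARD('n)}"
  show inj: "inj_on w ?N"
  proof (rule inj_onI)
    fix k l assume "k \<in> ?N" "l \<in> ?N" "w k = w l"
    then show "k = l" using orth[of k l] orth[of k k] by (auto split: if_splits)
  qed
  have "independent (w ` ?N)"
  proof (rule independent_if_scalars_zero)
    fix f z assume comb: "(\<Sum>x\<in>w ` ?N. f x *\<^sub>R x) = 0" and "z \<in> w ` ?N"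
    then obtain k where k: "k \<in> ?N" and z: "z = w k" by blast
    have "0 = w k \<bullet> (S *v (\<Sum>x\<in>w ` ?N. f x *\<^sub>R x))" using comb by simp
    also have "\<dots> = (\<Sum>x\<in>w ` ?N. f x * (w k \<bullet> (S *v x)))"
      by (simp add: matrix_vector_mult_sum matrix_vector_mult_scaleR inner_sum_right)
    also have "\<dots> = (\<Sum>l\<in>?N. f (w l) * (w k \<bullet> (S *v w l)))"
      by (simp only: sum.reindex[OF inj] o_def)
    also have "\<dots> = f z"
      using k by (simp add: orth z if_distrib cong: if_cong)
    finally show "f z = 0" ..
  qed simp
  moreover have "card (w ` ?N) = CARD('n)"
    using card_image[OF inj] by simp
  ultimately show "span (w ` ?N) = UNIV"
    using card_eq_dim[of "w ` ?N" UNIV] by (auto simp: dim_UNIV)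
qed

lemma sigma_orthonormal_expansion:
  fixes S :: "real^'n^'n" and w :: "nat \<Rightarrow> real^'n"
  assumes sym_S: "transpose S = S"
    and orth: "\<And>k l. k \<in> {1..CARD('n)} \<Longrightarrow> l \<in> {1..CARD('n)} \<Longrightarrow>
      w k \<bullet> (S *v w l) = (if k = l then 1 else 0)"
  shows "x = (\<Sum>l\<in>{1..CARD('n)}. ((S *v w l) \<bullet> x) *\<^sub>R w l)"
proof -
  let ?N = "{1..CARD('n)}"
  note basis = sigma_orthonormal_basis[OF orth]
  have "x \<in> span (w ` ?N)" using basis(2) by simp
  then obtain g where "x = (\<Sum>z\<in>w ` ?N. g z *\<^sub>R z)"
    by (auto simp: span_finite)
  then have c: "x = (\<Sum>l\<in>?N. g (w l) *\<^sub>R w l)"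
    by (simp only: sum.reindex[OF basis(1)] o_def)
  have "(S *v w k) \<bullet> x = g (w k)" if "k \<in> ?N" for k
    using that by (subst c) (simp add: inner_sum_right symmetric_mv_inner[OF sym_S] orth
        if_distrib cong: if_cong)
  then show ?thesis by (subst (1) c) (rule sum.cong, auto)
qed

section \<open>Moore--Penrose inverse of a symmetric matrix\<close>

definition penrose :: "real^'k^'m \<Rightarrow> real^'m^'k \<Rightarrow> bool" where
  "penrose A X \<longleftrightarrow> A ** X ** A = A \<and> X ** A ** X = X \<and>
     transpose (A ** X) = A ** X \<and> transpose (X ** A) = X ** A"

lemma penrose_unique:
  assumes "penrose A X" "penrose A Y"
  shows "X = Y"
proof -
  have X1: "A ** X ** A = A" and X2: "X ** A ** X = X" and X3: "transpose (A ** X) = A ** X"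
    and X4: "transpose (X ** A) = X ** A"
    using assms(1) unfolding penrose_def by auto
  have Y1: "A ** Y ** A = A" and Y2: "Y ** A ** Y = Y" and Y3: "transpose (A ** Y) = A ** Y"
    and Y4: "transpose (Y ** A) = Y ** A"
    using assms(2) unfolding penrose_def by auto
  have "transpose A = transpose ((A ** Y) ** A)" using Y1 by simp
  then have AtAY: "transpose A = transpose A ** (A ** Y)"
    using Y3 by (simp add: matrix_transpose_mul)
  have "transpose A = transpose (A ** (X ** A))" using X1 by (simp add: matrix_mul_assoc)
  then have XAAt: "transpose A = (X ** A) ** transpose A"
    using X4 by (simp add: matrix_transpose_mul)
  have "X = X ** transpose (A ** X)" using X2 X3 by (simp add: matrix_mul_assoc)
  also have "\<dots> = X ** transpose X ** (transpose A ** (A ** Y))"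
    using AtAY by (simp add: matrix_transpose_mul matrix_mul_assoc)
  also have "\<dots> = X ** transpose (A ** X) ** A ** Y"
    by (simp add: matrix_transpose_mul matrix_mul_assoc)
  also have "\<dots> = X ** A ** Y"
    using X2 X3 by (simp add: matrix_mul_assoc)
  finally have X_eq: "X = X ** A ** Y" .
  have "Y = transpose (Y ** A) ** Y" using Y2 Y4 by simp
  also have "\<dots> = (X ** A) ** transpose A ** transpose Y ** Y"
    using XAAt by (simp add: matrix_transpose_mul matrix_mul_assoc)
  also have "\<dots> = X ** A ** transpose (Y ** A) ** Y"
    by (simp add: matrix_transpose_mul matrix_mul_assoc)
  also have "\<dots> = X ** A ** (Y ** A ** Y)"
    by (simp add: Y4 matrix_mul_assoc)
  also have "\<dots> = X ** A ** Y"
    using Y2 by simp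
  finally show ?thesis using X_eq by simp
qed

lemma penrose_pinv:
  assumes "penrose A X"
  shows "penrose A (pinv A)"
proof -
  have "\<exists>!X. penrose A X" using assms penrose_unique by blast
  then show ?thesis unfolding pinv_def penrose_def[symmetric] by (rule theI')
qed

lemma pinv_mv_range:
  assumes "penrose A X" "b \<in> range ((*v) A)"
  shows "A *v (pinv A *v b) = b"
proof -
  obtain z where "b = A *v z" using assms(2) by blast
  moreover have "A ** pinv A ** A = A"
    using penrose_pinv[OF assms(1)] unfolding penrose_def by blast
  ultimately show ?thesis by (metis matrix_vector_mul_assoc)
qed

lemma orthogonal_projection_matrix:
  fixes S :: "(real^'k) set"
  assumes "subspace S"
  obtains P :: "real^'k^'k"
  where "transpose P = P" "\<And>x. P *v x \<in> S" "\<And>x. x \<in> S \<Longrightarrow> P *v x = x"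
    "\<And>x z. z \<in> S \<Longrightarrow> z \<bullet> (x - P *v x) = 0"
proof -
  obtain B where BS: "B \<subseteq> S" and orth: "pairwise orthogonal B"
    and unit: "\<And>x. x \<in> B \<Longrightarrow> norm x = 1" and indep: "independent B" and span_B: "span B = S"
    by (rule orthonormal_basis_subspace[OF assms]) blast
  have fin: "finite B" using indep independent_imp_finite by blast
  define P where "P = (\<Sum>b\<in>B. outer b b)"
  have P_mv: "P *v x = (\<Sum>b\<in>B. (b \<bullet> x) *\<^sub>R b)" for x
    unfolding P_def sum_matrix_vector_mult outer_mv ..
  have inner_B: "c \<bullet> b = (if c = b then 1 else 0)" if "b \<in> B" "c \<in> B" for b c
    using orth unit[OF that(1)] that by (auto simp: pairwise_def orthogonal_def dot_square_norm)
  have B_inner_P: "b \<bullet> (P *v x) = b \<bullet> x" if "b \<in> B" for b x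
    using that fin by (simp add: P_mv inner_sum_right inner_B if_distrib cong: if_cong)
  have P_B: "P *v b = b" if "b \<in> B" for b
  proof -
    have "P *v b = (\<Sum>c\<in>B. if c = b then c else 0)"
      unfolding P_mv by (rule sum.cong) (use inner_B that in auto)
    then show ?thesis using that fin by simp
  qed
  show ?thesis
  proof
    show "transpose P = P"
      unfolding P_def by (simp add: vec_eq_iff transpose_def outer_def sum_component mult.commute)
    show "P *v x \<in> S" for x
      unfolding P_mv span_B[symmetric] by (intro span_sum span_scale span_base)
    show "P *v x = x" if "x \<in> S" for x
      using that unfolding span_B[symmetric]
      by (induction rule: span_induct_alt) (simp_all add: P_B algebra_simps)
    show "z \<bullet> (x - P *v x) = 0" if "z \<in> S" for x z
    proof -
      have "orthogonal (x - P *v x) b" if "b \<in> B" for b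
        using B_inner_P[OF that] by (simp add: orthogonal_def inner_diff_right inner_commute)
      then have "orthogonal (x - P *v x) z"
        using orthogonal_to_span[of z B] span_B \<open>z \<in> S\<close> by blast
      then show ?thesis by (simp add: orthogonal_def inner_commute)
    qed
  qed
qed

lemma penrose_from_projection:
  fixes A P :: "real^'k^'k"
  assumes sym_P: "transpose P = P" and idem: "P ** P = P"
    and AP: "A ** P = A" and PA: "P ** A = A" and inv: "invertible (A + mat 1 - P)"
  shows "penrose A (matrix_inv (A + mat 1 - P) ** P)"
proof -
  define B where "B = A + mat 1 - P"
  define Bi where "Bi = matrix_inv B"
  have BiB: "Bi ** B = mat 1" and BBi: "B ** Bi = mat 1"
    using matrix_inv_cancel[OF inv] by (simp_all add: B_def Bi_def)
  have AP_mv: "A *v (P *v x) = A *v x" and PA_mv: "P *v (A *v x) = A *v x"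
    and PP_mv: "P *v (P *v x) = P *v x" for x
    using AP PA idem by (metis matrix_vector_mul_assoc)+
  have BP: "B ** P = A" and PB: "P ** B = A"
    by (simp_all add: matrix_eq B_def matrix_vector_mul_assoc[symmetric] algebra_simps
        AP_mv PA_mv PP_mv)
  have comm: "Bi ** P = P ** Bi"
  proof -
    have "Bi ** P = Bi ** P ** (B ** Bi)"
      using BBi by simp
    also have "\<dots> = Bi ** (P ** B) ** Bi"
      by (simp add: matrix_mul_assoc)
    also have "\<dots> = (Bi ** B) ** P ** Bi"
      by (metis BP PB matrix_mul_assoc)
    finally show ?thesis using BiB by simp
  qed
  have AX: "A ** (Bi ** P) = P"
    using PB BBi idem by (metis comm matrix_mul_assoc matrix_mul_rid)
  have XA: "(Bi ** P) ** A = P"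
    using BP BiB by (metis PA matrix_mul_assoc matrix_mul_lid)
  show ?thesis
    unfolding penrose_def B_def[symmetric] Bi_def[symmetric]
    using AX XA PA sym_P idem comm by (simp add: matrix_mul_assoc)
qed

lemma symmetric_orthogonal_range_imp_kernel:
  fixes A :: "real^'k^'k"
  assumes sym_A: "transpose A = A" and orth: "\<And>z. z \<in> range ((*v) A) \<Longrightarrow> z \<bullet> x = 0"
  shows "A *v x = 0"
proof -
  have "(A *v x) \<bullet> (A *v x) = x \<bullet> (A *v (A *v x))"
    by (rule symmetric_mv_inner[OF sym_A])
  also have "\<dots> = 0" using orth[of "A *v (A *v x)"] by (simp add: inner_commute)
  finally show ?thesis by simp
qed

text \<open>With \<open>P\<close> the orthogonal projection onto the range of \<open>A\<close>, symmetry of \<open>A\<close> makes its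
  kernel orthogonal to its range; hence \<open>A ** P = A\<close> and \<open>A + mat 1 - P\<close> is injective.\<close>
lemma penrose_exists_symmetric:
  fixes A :: "real^'k^'k"
  assumes sym_A: "transpose A = A"
  shows "\<exists>X. penrose A X"
proof -
  have "subspace (range ((*v) A))"
    by (intro linear_subspace_image matrix_vector_mul_linear subspace_UNIV)
  then obtain P :: "real^'k^'k" where sym_P: "transpose P = P"
    and P_range: "\<And>x. P *v x \<in> range ((*v) A)" and P_id: "\<And>x. x \<in> range ((*v) A) \<Longrightarrow> P *v x = x"
    and P_orth: "\<And>x z. z \<in> range ((*v) A) \<Longrightarrow> z \<bullet> (x - P *v x) = 0"
    using orthogonal_projection_matrix by blast
  have AP_mv: "A *v (P *v x) = A *v x" for x
    using symmetric_orthogonal_range_imp_kernel[OF sym_A, of "x - P *v x"] P_orth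
    by (simp add: matrix_vector_mult_diff_distrib)
  have "invertible (A + mat 1 - P)"
  proof (rule invertible_if_trivial_kernel)
    fix x assume "(A + mat 1 - P) *v x = 0"
    then have Ax: "A *v x = - (x - P *v x)"
      by (simp add: algebra_simps)
    then have "(A *v x) \<bullet> (A *v x) = 0"
      using P_orth[of "A *v x" x] by (metis inner_minus_right neg_equal_0_iff_equal rangeI)
    then have "A *v x = 0" by simp
    moreover obtain t where "P *v x = A *v t" using P_range by blast
    ultimately have "x \<bullet> x = t \<bullet> (A *v x)"
      using Ax by (metis symmetric_mv_inner[OF sym_A] diff_eq_eq add_0 neg_equal_0_iff_equal)
    then show "x = 0" using \<open>A *v x = 0\<close> by simp
  qed
  moreover have "P ** P = P" "A ** P = A" "P ** A = A"
    using P_range P_id AP_mv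
    by (auto simp: matrix_eq matrix_vector_mul_assoc[symmetric])
  ultimately show ?thesis
    using penrose_from_projection[OF sym_P] by blast
qed

section \<open>Decay of the recursion \<open>p\<^sub>i\<^sub>+\<^sub>1 = p\<^sub>i / (1 + a p\<^sub>i\<^sup>2)\<close>\<close>

lemma recursion_square_bound:
  fixes p :: "nat \<Rightarrow> real"
  assumes a: "a > 0" and p0: "p 0 = 1" and p_Suc: "\<And>i. p (Suc i) = p i / (1 + a * (p i)\<^sup>2)"
  shows "p i > 0 \<and> (p i)\<^sup>2 * (1 + 2 * a * real i) \<le> 1"
proof (induction i)
  case 0
  then show ?case using p0 by simp
next
  case (Suc i)
  let ?q = "p i" and ?d = "1 + a * (p i)\<^sup>2"
  have q: "?q > 0" and IH: "?q\<^sup>2 * (1 + 2 * a * real i) \<le> 1" using Suc by auto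
  have d: "?d \<ge> 1" using a by simp
  have "(p (Suc i))\<^sup>2 * (1 + 2 * a * real (Suc i)) = (?q\<^sup>2 * (1 + 2 * a * real i) + 2 * a * ?q\<^sup>2) / ?d\<^sup>2"
    by (simp add: p_Suc power_divide algebra_simps)
  also have "\<dots> \<le> (1 + 2 * a * ?q\<^sup>2) / ?d\<^sup>2"
    using IH by (simp add: divide_right_mono)
  also have "\<dots> \<le> 1"
  proof -
    have "?d\<^sup>2 = 1 + 2 * a * ?q\<^sup>2 + (a * ?q\<^sup>2)\<^sup>2"
      by (simp add: power2_eq_square algebra_simps)
    then have "1 + 2 * a * ?q\<^sup>2 \<le> ?d\<^sup>2"
      using zero_le_power2[of "a * ?q\<^sup>2"] by linarith
    then show ?thesis using d by simp
  qed
  finally show ?case using q d p_Suc by simp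
qed

lemma recursion_bigo_inverse_sqrt:
  fixes p :: "nat \<Rightarrow> real"
  assumes a: "a > 0" and p0: "p 0 = 1" and p_Suc: "\<And>i. p (Suc i) = p i / (1 + a * (p i)\<^sup>2)"
  shows "p \<in> O(\<lambda>i. 1 / sqrt (real i))"
proof (rule bigoI)
  have "norm (p i) \<le> (1 / sqrt (2 * a)) * norm (1 / sqrt (real i))" if "i \<ge> 1" for i
  proof -
    have pos: "p i > 0" and sq: "(p i)\<^sup>2 * (1 + 2 * a * real i) \<le> 1"
      using recursion_square_bound[OF a p0 p_Suc] by auto
    have "(p i)\<^sup>2 * (2 * a * real i) \<le> (p i)\<^sup>2 * (1 + 2 * a * real i)"
      by (intro mult_left_mono) auto
    then have "(p i)\<^sup>2 * (2 * a * real i) \<le> 1"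
      using sq by linarith
    then have "(p i)\<^sup>2 \<le> 1 / (2 * a * real i)"
      using a that by (simp add: field_simps)
    then have "p i \<le> sqrt (1 / (2 * a * real i))"
      by (rule real_le_rsqrt)
    then show ?thesis
      using pos by (simp add: real_sqrt_divide real_sqrt_mult)
  qed
  then show "\<forall>\<^sub>F i in at_top. norm (p i) \<le> (1 / sqrt (2 * a)) * norm (1 / sqrt (real i))"
    unfolding eventually_at_top_linorder by blast
qed

section \<open>Empirical covariance\<close>

lemma emp_cov_mv:
  "emp_cov J v *v x = (1 / (real J - 1)) *\<^sub>R
     (\<Sum>j\<in>{1..J}. ((v j - ens_mean J v) \<bullet> x) *\<^sub>R (v j - ens_mean J v))"
  unfolding emp_cov_def scaleR_matrix_vector_assoc[symmetric] sum_matrix_vector_mult outer_mv ..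

lemma emp_cov_sym: "transpose (emp_cov J v) = emp_cov J v"
  unfolding emp_cov_def
  by (simp add: vec_eq_iff transpose_def outer_def sum_component mult.commute)

lemma emp_cov_quadratic:
  "x \<bullet> (emp_cov J v *v x) = (1 / (real J - 1)) * (\<Sum>j\<in>{1..J}. ((v j - ens_mean J v) \<bullet> x)\<^sup>2)"
  unfolding emp_cov_mv by (simp add: inner_sum_right power2_eq_square inner_commute)

lemma emp_cov_nonneg: "x \<bullet> (emp_cov J v *v x) \<ge> 0"
  unfolding emp_cov_quadratic by (cases "J = 0") (auto intro!: sum_nonneg divide_nonneg_nonneg)

lemma emp_cov_mv_eq_0:
  assumes "x \<bullet> (emp_cov J v *v x) = 0"
  shows "emp_cov J v *v x = 0"
proof (cases "J < 2")
  case True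
  \<comment> \<open>then the covariance vanishes; for \<open>J = 1\<close> because its normalisation is \<open>1 / 0 = 0\<close>\<close>
  then have "J = 0 \<or> J = 1" by auto
  then show ?thesis unfolding emp_cov_mv by auto
next
  case False
  then have "(\<Sum>j\<in>{1..J}. ((v j - ens_mean J v) \<bullet> x)\<^sup>2) = 0"
    using assms unfolding emp_cov_quadratic by simp
  then have "\<forall>j\<in>{1..J}. (v j - ens_mean J v) \<bullet> x = 0"
    by (subst (asm) sum_nonneg_eq_0_iff) auto
  then show ?thesis unfolding emp_cov_mv by simp
qed

lemma ens_mean_affine:
  assumes "J \<noteq> 0" and "\<And>j. j \<in> {1..J} \<Longrightarrow> v' j = B *v v j + c"
  shows "ens_mean J v' = B *v ens_mean J v + c"
  using assms by (simp add: ens_mean_def sum.distrib matrix_vector_mult_sum[symmetric]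
      matrix_vector_mult_scaleR sum_constant_scaleR scaleR_add_right del: sum_constant)

lemma emp_cov_affine:
  assumes "\<And>j. j \<in> {1..J} \<Longrightarrow> v' j = B *v v j + c"
  shows "emp_cov J v' = B ** emp_cov J v ** transpose B"
proof (cases "J = 0")
  case True
  then show ?thesis by (simp add: emp_cov_def)
next
  case False
  define d where "d j = v j - ens_mean J v" for j
  have dev: "v' j - ens_mean J v' = B *v d j" if "j \<in> {1..J}" for j
    using assms[OF that] ens_mean_affine[OF False assms]
    by (simp add: d_def matrix_vector_mult_diff_distrib)
  have "emp_cov J v' *v x = (B ** emp_cov J v ** transpose B) *v x" for x
  proof -
    have inner_transpose: "z \<bullet> (transpose B *v x) = (B *v z) \<bullet> x" for z
      using transpose_mv_inner[of B x z] by (simp add: inner_commute)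
    have "emp_cov J v' *v x = (1 / (real J - 1)) *\<^sub>R
        (\<Sum>j\<in>{1..J}. ((B *v d j) \<bullet> x) *\<^sub>R (B *v d j))"
      unfolding emp_cov_mv by (intro arg_cong[where f = "scaleR _"] sum.cong) (simp_all add: dev)
    also have "\<dots> = B *v (emp_cov J v *v (transpose B *v x))"
      by (simp add: emp_cov_mv d_def inner_transpose matrix_vector_mult_sum
          matrix_vector_mult_scaleR)
    also have "\<dots> = (B ** emp_cov J v ** transpose B) *v x"
      by (simp add: matrix_vector_mul_assoc matrix_mul_assoc)
    finally show ?thesis .
  qed
  then show ?thesis by (simp add: matrix_eq)
qed

section \<open>Deterministic EKI for a linear forward map\<close>

text \<open>Of the hypotheses of the theorem, \<open>rank H = h\<close> is only needed as \<open>h \<le> CARD('n)\<close>.\<close>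
locale eki_linear =
  fixes H :: "real^'d^'n" and \<Sigma> :: "real^'n^'n" and y :: "real^'n"
    and J :: nat and v :: "nat \<Rightarrow> nat \<Rightarrow> real^'d"
    and h r :: nat and w :: "nat \<Rightarrow> real^'n" and u :: "nat \<Rightarrow> real^'d" and \<delta> :: "nat \<Rightarrow> nat \<Rightarrow> real"
  assumes Sigma: "sym_posdef \<Sigma>"
    and EKI: "\<And>i j. j \<in> {1..J} \<Longrightarrow>
       v (Suc i) j = v i j + (emp_cov J (v i) ** transpose H **
          matrix_inv (H ** emp_cov J (v i) ** transpose H + \<Sigma>)) *v (y - H *v v i j)"
    and orth: "\<And>k l. k \<in> {1..CARD('n)} \<Longrightarrow> l \<in> {1..CARD('n)} \<Longrightarrow>
       w k \<bullet> (\<Sigma> *v w l) = (if k = l then 1 else 0)"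
    and eig: "\<And>l i. l \<in> {1..CARD('n)} \<Longrightarrow>
       (H ** emp_cov J (v i) ** transpose H) *v w l = \<delta> l i *\<^sub>R (\<Sigma> *v w l)"
    and r_le_h: "r \<le> h" and h_le_n: "h \<le> CARD('n)"
    and pos: "\<And>l. l \<in> {1..r} \<Longrightarrow>
       w l \<in> range (\<lambda>x. matrix_inv \<Sigma> *v (H *v x)) \<and> \<delta> l 0 > 0"
    and zero: "\<And>l. l \<in> {r+1..h} \<Longrightarrow>
       w l \<in> range (\<lambda>x. matrix_inv \<Sigma> *v (H *v x)) \<and> \<delta> l 0 = 0"
    and kerin: "\<And>l. l \<in> {h+1..CARD('n)} \<Longrightarrow> transpose H *v w l = 0"
    and u_def: "\<And>l. u l = (if l \<le> r
                 then (1 / \<delta> l 0) *\<^sub>R ((emp_cov J (v 0) ** transpose H) *v w l)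
                 else Hplus H \<Sigma> *v (\<Sigma> *v w l))"
begin

abbreviation cov :: "nat \<Rightarrow> real^'d^'d" where
  "cov i \<equiv> emp_cov J (v i)"

definition gram :: "real^'d^'d" where
  "gram = transpose H ** matrix_inv \<Sigma> ** H"

definition v_opt :: "real^'d" where
  "v_opt = pinv gram *v (transpose H *v (matrix_inv \<Sigma> *v y))"

definition innov :: "nat \<Rightarrow> real^'n^'n" where
  "innov i = H ** cov i ** transpose H + \<Sigma>"

definition gain :: "nat \<Rightarrow> real^'d^'d" where
  "gain i = cov i ** transpose H ** matrix_inv (innov i) ** H"

text \<open>\<open>hw l \<bullet> x = w l \<bullet> (H *v x)\<close> is the coefficient of \<open>H *v x\<close> along \<open>\<Sigma> *v w l\<close>.\<close>
definition hw :: "nat \<Rightarrow> real^'d" where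
  "hw l = transpose H *v w l"

definition damping :: "nat \<Rightarrow> nat \<Rightarrow> real" where
  "damping l i = (\<Prod>k<i. 1 / (1 + \<delta> l k))"

definition proj_P :: "real^'d^'d" where
  "proj_P = (\<Sum>l\<in>{1..r}. outer (u l) (u l)) ** gram"

definition proj_Q :: "real^'d^'d" where
  "proj_Q = (\<Sum>l\<in>{r+1..h}. outer (u l) (u l)) ** gram"

lemma Sigma_sym: "transpose \<Sigma> = \<Sigma>"
  using Sigma by (simp add: sym_posdef_def)

lemma Sigma_invertible: "invertible \<Sigma>"
  using Sigma unfolding sym_posdef_def by (intro invertible_if_posdef) auto

lemmas Sigma_inv_cancel = matrix_inv_mv_cancel[OF Sigma_invertible]

lemma Sigma_inv_sym: "transpose (matrix_inv \<Sigma>) = matrix_inv \<Sigma>"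
  by (rule transpose_matrix_inv_sym[OF Sigma_invertible Sigma_sym])

lemma gram_mv: "gram *v x = transpose H *v (matrix_inv \<Sigma> *v (H *v x))"
  by (simp add: gram_def matrix_vector_mul_assoc matrix_mul_assoc)

lemma gram_sym: "transpose gram = gram"
  by (simp add: gram_def matrix_transpose_mul Sigma_inv_sym matrix_mul_assoc)

lemma hw_inner: "hw l \<bullet> x = w l \<bullet> (H *v x)"
  by (simp add: hw_def transpose_mv_inner)

lemma hw_vanish: "l \<in> {h+1..CARD('n)} \<Longrightarrow> hw l = 0"
  by (simp add: hw_def kerin)

lemma H_cov_hw: "l \<in> {1..CARD('n)} \<Longrightarrow> H *v (cov i *v hw l) = \<delta> l i *\<^sub>R (\<Sigma> *v w l)"
  using eig by (simp add: hw_def matrix_vector_mul_assoc matrix_mul_assoc)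

lemma delta_quadratic: "l \<in> {1..CARD('n)} \<Longrightarrow> \<delta> l i = hw l \<bullet> (cov i *v hw l)"
  by (simp add: hw_inner H_cov_hw orth)

lemma delta_nonneg: "l \<in> {1..CARD('n)} \<Longrightarrow> \<delta> l i \<ge> 0"
  by (simp add: delta_quadratic emp_cov_nonneg)

lemma Sigma_inv_expansion: "matrix_inv \<Sigma> *v z = (\<Sum>l\<in>{1..CARD('n)}. (w l \<bullet> z) *\<^sub>R w l)"
proof -
  have coeff: "(\<Sigma> *v w l) \<bullet> (matrix_inv \<Sigma> *v z) = w l \<bullet> z" for l
    using symmetric_mv_inner[OF Sigma_sym, of "w l"] by (simp add: Sigma_inv_cancel)
  show ?thesis
    using sigma_orthonormal_expansion[OF Sigma_sym orth, of "matrix_inv \<Sigma> *v z"]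
    unfolding coeff .
qed

lemma Sigma_expansion: "z = (\<Sum>l\<in>{1..CARD('n)}. (w l \<bullet> z) *\<^sub>R (\<Sigma> *v w l))"
proof -
  have "z = \<Sigma> *v (matrix_inv \<Sigma> *v z)" by (simp add: Sigma_inv_cancel)
  then show ?thesis
    by (simp add: Sigma_inv_expansion matrix_vector_mult_sum matrix_vector_mult_scaleR)
qed

lemma sum_upto_h:
  assumes "\<And>l. l \<in> {h+1..CARD('n)} \<Longrightarrow> f l = 0"
  shows "(\<Sum>l\<in>{1..CARD('n)}. f l) = (\<Sum>l\<in>{1..h}. f l)"
proof -
  have "{1..CARD('n)} = {1..h} \<union> {h+1..CARD('n)}" using h_le_n by auto
  then show ?thesis using assms by (simp add: sum.union_disjoint)
qed

lemma gram_range_subspace: "subspace (range ((*v) gram))"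
  by (intro linear_subspace_image matrix_vector_mul_linear subspace_UNIV)

lemma hw_in_gram_range: "l \<in> {1..h} \<Longrightarrow> hw l \<in> range ((*v) gram)"
proof -
  assume "l \<in> {1..h}"
  then have "l \<in> {1..r} \<or> l \<in> {r+1..h}" by auto
  then obtain x where "w l = matrix_inv \<Sigma> *v (H *v x)" using pos zero by blast
  then show ?thesis by (simp add: hw_def gram_mv)
qed

lemma HT_Sigma_inv_in_gram_range: "transpose H *v (matrix_inv \<Sigma> *v z) \<in> range ((*v) gram)"
proof -
  have "transpose H *v (matrix_inv \<Sigma> *v z) = (\<Sum>l\<in>{1..CARD('n)}. (w l \<bullet> z) *\<^sub>R hw l)"
    by (simp add: Sigma_inv_expansion matrix_vector_mult_sum matrix_vector_mult_scaleR hw_def)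
  also have "\<dots> = (\<Sum>l\<in>{1..h}. (w l \<bullet> z) *\<^sub>R hw l)"
    by (rule sum_upto_h) (simp add: hw_vanish)
  also have "\<dots> \<in> range ((*v) gram)"
    by (intro subspace_sum[OF gram_range_subspace] subspace_scale[OF gram_range_subspace]
        hw_in_gram_range)
  finally show ?thesis .
qed

lemma gram_pinv_cancel: "b \<in> range ((*v) gram) \<Longrightarrow> gram *v (pinv gram *v b) = b"
  using pinv_mv_range penrose_exists_symmetric[OF gram_sym] by blast

lemma normal_equation: "transpose H *v (matrix_inv \<Sigma> *v (y - H *v v_opt)) = 0"
proof -
  have "gram *v v_opt = transpose H *v (matrix_inv \<Sigma> *v y)"
    unfolding v_opt_def by (rule gram_pinv_cancel[OF HT_Sigma_inv_in_gram_range])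
  then show ?thesis
    by (simp add: gram_mv matrix_vector_mult_diff_distrib)
qed

lemma innov_mv: "innov i *v x = H *v (cov i *v (transpose H *v x)) + \<Sigma> *v x"
  by (simp add: innov_def matrix_vector_mult_add_rdistrib matrix_vector_mul_assoc matrix_mul_assoc)

lemma innov_invertible: "invertible (innov i)"
proof (rule invertible_if_posdef)
  fix x :: "real^'n" assume "x \<noteq> 0"
  then have "x \<bullet> (\<Sigma> *v x) > 0" using Sigma by (simp add: sym_posdef_def)
  moreover have "x \<bullet> (H *v (cov i *v (transpose H *v x))) \<ge> 0"
    using emp_cov_nonneg by (metis inner_commute transpose_mv_inner)
  ultimately show "x \<bullet> (innov i *v x) > 0"
    by (simp add: innov_mv inner_add_right)
qed

lemmas innov_inv_cancel = matrix_inv_mv_cancel[OF innov_invertible]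

lemma innov_inv_sym: "transpose (matrix_inv (innov i)) = matrix_inv (innov i)"
proof (rule transpose_matrix_inv_sym[OF innov_invertible])
  show "transpose (innov i) = innov i"
    by (simp add: innov_def transpose_matrix_add Sigma_sym matrix_transpose_mul emp_cov_sym
        matrix_mul_assoc)
qed

lemma innov_inv_Sigma_w:
  assumes "l \<in> {1..CARD('n)}"
  shows "matrix_inv (innov i) *v (\<Sigma> *v w l) = (1 / (1 + \<delta> l i)) *\<^sub>R w l"
proof -
  have "innov i *v w l = (1 + \<delta> l i) *\<^sub>R (\<Sigma> *v w l)"
    using H_cov_hw[OF assms] by (simp add: innov_mv hw_def algebra_simps)
  then have "w l = (1 + \<delta> l i) *\<^sub>R (matrix_inv (innov i) *v (\<Sigma> *v w l))"
    by (metis innov_inv_cancel(2) matrix_vector_mult_scaleR)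
  then have "(1 / (1 + \<delta> l i)) *\<^sub>R w l
      = (1 / (1 + \<delta> l i)) *\<^sub>R ((1 + \<delta> l i) *\<^sub>R (matrix_inv (innov i) *v (\<Sigma> *v w l)))"
    by (rule arg_cong)
  moreover have "1 + \<delta> l i \<noteq> 0" using delta_nonneg[OF assms, of i] by simp
  ultimately show ?thesis by simp
qed

lemma gain_mv: "gain i *v x = cov i *v (transpose H *v (matrix_inv (innov i) *v (H *v x)))"
  by (simp add: gain_def matrix_vector_mul_assoc matrix_mul_assoc)

text \<open>Since the residual of \<open>v_opt\<close> is \<open>\<Sigma>\<close>-orthogonal to the range of \<open>H\<close>, the data \<open>y\<close>
  drop out of the error dynamics.\<close>
lemma error_recursion:
  assumes "j \<in> {1..J}"
  shows "v (Suc i) j - v_opt = (v i j - v_opt) - gain i *v (v i j - v_opt)"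
proof -
  define res where "res = y - H *v v_opt"
  have "innov i *v (matrix_inv \<Sigma> *v res) = res"
    using normal_equation by (simp add: innov_mv res_def Sigma_inv_cancel)
  then have innov_res: "matrix_inv (innov i) *v res = matrix_inv \<Sigma> *v res"
    by (metis innov_inv_cancel(2))
  have y_split: "y - H *v v i j = res - H *v (v i j - v_opt)"
    by (simp add: res_def matrix_vector_mult_diff_distrib)
  have "matrix_inv (innov i) *v (y - H *v v i j)
      = matrix_inv \<Sigma> *v res - matrix_inv (innov i) *v (H *v (v i j - v_opt))"
    unfolding y_split by (simp add: matrix_vector_mult_diff_distrib innov_res)
  then have "transpose H *v (matrix_inv (innov i) *v (y - H *v v i j))
      = - (transpose H *v (matrix_inv (innov i) *v (H *v (v i j - v_opt))))"
    using normal_equation[folded res_def]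
    by (simp add: matrix_vector_mult_diff_distrib matrix_vector_right_distrib)
  moreover have "v (Suc i) j
      = v i j + cov i *v (transpose H *v (matrix_inv (innov i) *v (y - H *v v i j)))"
    using EKI[OF assms] by (simp add: innov_def[symmetric] matrix_vector_mul_assoc[symmetric])
  ultimately show ?thesis
    by (simp add: gain_mv matrix_vector_mult_diff_distrib)
qed

lemma inner_transpose_H: "a \<bullet> (transpose H *v b) = (H *v a) \<bullet> b"
  using transpose_mv_inner[of H b a] by (simp add: inner_commute)

lemma cov_inner_sym: "(cov i *v a) \<bullet> b = a \<bullet> (cov i *v b)"
  by (rule symmetric_mv_inner[OF emp_cov_sym])

lemma hw_gain_step:
  assumes "l \<in> {1..CARD('n)}"
  shows "hw l \<bullet> (x - gain i *v x) = (hw l \<bullet> x) / (1 + \<delta> l i)"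
proof -
  have "hw l \<bullet> (gain i *v x) = (H *v (cov i *v hw l)) \<bullet> (matrix_inv (innov i) *v (H *v x))"
    by (simp add: gain_mv cov_inner_sym[symmetric] inner_transpose_H)
  also have "\<dots> = \<delta> l i * ((matrix_inv (innov i) *v (\<Sigma> *v w l)) \<bullet> (H *v x))"
    by (simp add: H_cov_hw[OF assms] symmetric_mv_inner[OF innov_inv_sym])
  also have "\<dots> = \<delta> l i / (1 + \<delta> l i) * (hw l \<bullet> x)"
    by (simp add: innov_inv_Sigma_w[OF assms] hw_inner)
  finally show ?thesis
    using delta_nonneg[OF assms, of i] by (simp add: inner_diff_right field_simps)
qed

lemma gain_cov_hw:
  assumes "l \<in> {1..CARD('n)}"
  shows "gain i *v (cov i *v hw l) = (\<delta> l i / (1 + \<delta> l i)) *\<^sub>R (cov i *v hw l)"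
  by (simp add: gain_mv H_cov_hw[OF assms] matrix_vector_mult_scaleR innov_inv_Sigma_w[OF assms]
      hw_def[symmetric])

lemma cov_Suc: "cov (Suc i) = (mat 1 - gain i) ** cov i ** transpose (mat 1 - gain i)"
proof (rule emp_cov_affine)
  fix j assume "j \<in> {1..J}"
  then show "v (Suc i) j = (mat 1 - gain i) *v v i j + gain i *v v_opt"
    using error_recursion by (simp add: algebra_simps)
qed

lemma cov_hw_Suc:
  assumes l: "l \<in> {1..CARD('n)}"
  shows "cov (Suc i) *v hw l = (1 / (1 + \<delta> l i))\<^sup>2 *\<^sub>R (cov i *v hw l)"
proof -
  have "x \<bullet> (transpose (mat 1 - gain i) *v hw l) = x \<bullet> ((1 / (1 + \<delta> l i)) *\<^sub>R hw l)" for x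
    using hw_gain_step[OF l, of x i] transpose_mv_inner[of "mat 1 - gain i" "hw l" x]
    by (simp add: inner_commute algebra_simps)
  then have "transpose (mat 1 - gain i) *v hw l = (1 / (1 + \<delta> l i)) *\<^sub>R hw l"
    using vector_eq_ldot by blast
  then have "cov (Suc i) *v hw l = (1 / (1 + \<delta> l i)) *\<^sub>R (cov i *v hw l - gain i *v (cov i *v hw l))"
    by (simp add: cov_Suc matrix_vector_mul_assoc[symmetric] matrix_vector_mult_scaleR
        matrix_vector_mult_diff_rdistrib)
  also have "\<dots> = (1 / (1 + \<delta> l i)) *\<^sub>R ((1 - \<delta> l i / (1 + \<delta> l i)) *\<^sub>R (cov i *v hw l))"
    by (simp add: gain_cov_hw[OF l] scaleR_diff_left)
  also have "\<dots> = (1 / (1 + \<delta> l i))\<^sup>2 *\<^sub>R (cov i *v hw l)"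
  proof -
    have "(1 / (1 + \<delta> l i)) * (1 - \<delta> l i / (1 + \<delta> l i)) = (1 / (1 + \<delta> l i))\<^sup>2"
      using delta_nonneg[OF l, of i] by (simp add: field_simps power2_eq_square)
    then show ?thesis by simp
  qed
  finally show ?thesis .
qed

lemma damping_Suc: "damping l (Suc i) = damping l i / (1 + \<delta> l i)"
  by (simp add: damping_def)

lemma cov_hw_damping:
  assumes "l \<in> {1..CARD('n)}"
  shows "cov i *v hw l = (damping l i)\<^sup>2 *\<^sub>R (cov 0 *v hw l)"
  by (induction i) (simp_all add: damping_def cov_hw_Suc[OF assms] power_divide)

lemma delta_damping:
  assumes "l \<in> {1..CARD('n)}"
  shows "\<delta> l i = (damping l i)\<^sup>2 * \<delta> l 0"
proof -
  have "\<delta> l i = hw l \<bullet> ((damping l i)\<^sup>2 *\<^sub>R (cov 0 *v hw l))"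
    by (simp only: delta_quadratic[OF assms, of i] cov_hw_damping[OF assms, of i])
  then show ?thesis using delta_quadratic[OF assms, of 0] by simp
qed

lemma damping_recursion:
  assumes "l \<in> {1..CARD('n)}"
  shows "damping l (Suc i) = damping l i / (1 + \<delta> l 0 * (damping l i)\<^sup>2)"
  by (simp add: damping_Suc delta_damping[OF assms, of i] mult.commute)

lemma hw_error_damping:
  assumes "l \<in> {1..CARD('n)}" and "j \<in> {1..J}"
  shows "hw l \<bullet> (v i j - v_opt) = damping l i * (hw l \<bullet> (v 0 j - v_opt))"
  by (induction i) (simp_all add: damping_def error_recursion[OF assms(2)] hw_gain_step[OF assms(1)])

lemma delta_zero_block: "l \<in> {r+1..h} \<Longrightarrow> \<delta> l i = 0"
  using delta_damping[of l i] zero h_le_n by simp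

lemma cov_hw_zero_block: "l \<in> {r+1..h} \<Longrightarrow> cov i *v hw l = 0"
  by (rule emp_cov_mv_eq_0) (use delta_quadratic[of l i] delta_zero_block h_le_n in simp)

lemma cov_hw_pos_block:
  assumes "l \<in> {1..r}"
  shows "cov i *v hw l = \<delta> l i *\<^sub>R u l"
proof -
  have l: "l \<in> {1..CARD('n)}" using assms r_le_h h_le_n by auto
  have "u l = (1 / \<delta> l 0) *\<^sub>R (cov 0 *v hw l)"
    using assms u_def[of l] by (simp add: hw_def matrix_vector_mul_assoc)
  then show ?thesis
    using pos[OF assms] by (simp add: cov_hw_damping[OF l, of i] delta_damping[OF l, of i])
qed

lemma sum_split_r: "(\<Sum>l\<in>{1..h}. f l) = (\<Sum>l\<in>{1..r}. f l) + (\<Sum>l\<in>{r+1..h}. f l)"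
proof -
  have "{1..h} = {1..r} \<union> {r+1..h}" using r_le_h by auto
  then show ?thesis by (simp add: sum.union_disjoint)
qed

lemma gain_eq_sum:
  "gain i *v x = (\<Sum>k\<in>{1..r}. ((hw k \<bullet> x) * (\<delta> k i / (1 + \<delta> k i))) *\<^sub>R u k)"
proof -
  have "matrix_inv (innov i) *v (H *v x)
      = (\<Sum>k\<in>{1..CARD('n)}. ((hw k \<bullet> x) / (1 + \<delta> k i)) *\<^sub>R w k)"
    by (subst Sigma_expansion[of "H *v x"])
      (simp add: matrix_vector_mult_sum matrix_vector_mult_scaleR innov_inv_Sigma_w hw_inner)
  then have "gain i *v x = (\<Sum>k\<in>{1..CARD('n)}. ((hw k \<bullet> x) / (1 + \<delta> k i)) *\<^sub>R (cov i *v hw k))"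
    by (simp add: gain_mv matrix_vector_mult_sum matrix_vector_mult_scaleR hw_def)
  also have "\<dots> = (\<Sum>k\<in>{1..h}. ((hw k \<bullet> x) / (1 + \<delta> k i)) *\<^sub>R (cov i *v hw k))"
    by (rule sum_upto_h) (simp add: hw_vanish)
  also have "\<dots> = (\<Sum>k\<in>{1..r}. ((hw k \<bullet> x) / (1 + \<delta> k i)) *\<^sub>R (cov i *v hw k))"
    unfolding sum_split_r by (simp add: sum.neutral cov_hw_zero_block)
  also have "\<dots> = (\<Sum>k\<in>{1..r}. ((hw k \<bullet> x) * (\<delta> k i / (1 + \<delta> k i))) *\<^sub>R u k)"
    by (rule sum.cong) (simp_all add: cov_hw_pos_block)
  finally show ?thesis .
qed

lemma gram_u:
  assumes "l \<in> {1..h}"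
  shows "gram *v u l = hw l"
proof (cases "l \<le> r")
  case True
  then have l: "l \<in> {1..r}" "l \<in> {1..CARD('n)}" using assms h_le_n by auto
  have "H *v u l = \<Sigma> *v w l"
    using pos[OF l(1)] H_cov_hw[OF l(2), of 0] cov_hw_pos_block[OF l(1), of 0]
    by (simp add: matrix_vector_mult_scaleR)
  then show ?thesis by (simp add: gram_mv Sigma_inv_cancel hw_def)
next
  case False
  then have "u l = pinv gram *v hw l"
    by (simp add: u_def Hplus_def gram_def[symmetric] matrix_vector_mul_assoc[symmetric]
        Sigma_inv_cancel hw_def)
  then show ?thesis by (simp add: gram_pinv_cancel hw_in_gram_range[OF assms])
qed

lemma outer_gram_mv:
  assumes "L \<subseteq> {1..h}"
  shows "((\<Sum>l\<in>L. outer (u l) (u l)) ** gram) *v x = (\<Sum>l\<in>L. (hw l \<bullet> x) *\<^sub>R u l)"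
proof -
  have "u l \<bullet> (gram *v x) = hw l \<bullet> x" if "l \<in> L" for l
    using that assms symmetric_mv_inner[OF gram_sym, of "u l" x] by (auto simp: gram_u)
  then show ?thesis
    by (simp add: matrix_vector_mul_assoc[symmetric] sum_matrix_vector_mult outer_mv)
qed

lemma proj_P_mv: "proj_P *v x = (\<Sum>l\<in>{1..r}. (hw l \<bullet> x) *\<^sub>R u l)"
  unfolding proj_P_def using r_le_h by (intro outer_gram_mv) auto

lemma proj_Q_mv: "proj_Q *v x = (\<Sum>l\<in>{r+1..h}. (hw l \<bullet> x) *\<^sub>R u l)"
  unfolding proj_Q_def by (intro outer_gram_mv) auto

lemma proj_P_step: "proj_P *v (x - gain i *v x) = proj_P *v x - gain i *v x"
proof -
  have coeff_step: "(hw l \<bullet> (x - gain i *v x)) *\<^sub>R u l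
      = (hw l \<bullet> x) *\<^sub>R u l - ((hw l \<bullet> x) * (\<delta> l i / (1 + \<delta> l i))) *\<^sub>R u l"
    if "l \<in> {1..r}" for l
  proof -
    have l: "l \<in> {1..CARD('n)}" using that r_le_h h_le_n by auto
    have "1 + \<delta> l i \<noteq> 0" using delta_nonneg[OF l, of i] by simp
    then show ?thesis by (simp add: hw_gain_step[OF l] field_simps flip: scaleR_diff_left)
  qed
  have "proj_P *v (x - gain i *v x) = (\<Sum>l\<in>{1..r}.
      (hw l \<bullet> x) *\<^sub>R u l - ((hw l \<bullet> x) * (\<delta> l i / (1 + \<delta> l i))) *\<^sub>R u l)"
    unfolding proj_P_mv by (rule sum.cong) (simp_all add: coeff_step)
  also have "\<dots> = proj_P *v x - gain i *v x"
    by (simp add: proj_P_mv gain_eq_sum sum_subtractf)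
  finally show ?thesis .
qed

lemma proj_Q_step: "proj_Q *v (x - gain i *v x) = proj_Q *v x"
proof -
  have "l \<in> {r+1..h} \<Longrightarrow> hw l \<bullet> (x - gain i *v x) = hw l \<bullet> x" for l
    using hw_gain_step[of l] delta_zero_block[of l] h_le_n by simp
  then show ?thesis
    unfolding proj_Q_mv by (intro sum.cong) simp_all
qed

lemma proj_Q_error_invariant:
  "j \<in> {1..J} \<Longrightarrow> proj_Q *v (v i j - v_opt) = proj_Q *v (v 0 j - v_opt)"
  by (induction i) (simp_all add: error_recursion proj_Q_step)

lemma proj_N_error_invariant:
  assumes "j \<in> {1..J}"
  shows "(mat 1 - proj_P - proj_Q) *v (v i j - v_opt) = (mat 1 - proj_P - proj_Q) *v (v 0 j - v_opt)"
proof (induction i)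
  case (Suc i)
  then show ?case
    by (simp add: error_recursion[OF assms] matrix_vector_mult_diff_rdistrib proj_P_step proj_Q_step)
qed simp

lemma damping_bigo:
  assumes "l \<in> {1..r}"
  shows "damping l \<in> O(\<lambda>i. 1 / sqrt (real i))"
proof (rule recursion_bigo_inverse_sqrt)
  have "l \<in> {1..CARD('n)}" using assms r_le_h h_le_n by auto
  then show "damping l (Suc i) = damping l i / (1 + \<delta> l 0 * (damping l i)\<^sup>2)" for i
    by (rule damping_recursion)
qed (use pos[OF assms] in \<open>simp_all add: damping_def\<close>)

lemma proj_P_error_bigo:
  assumes j: "j \<in> {1..J}"
  shows "(\<lambda>i. norm (proj_P *v (v i j - v_opt))) \<in> O(\<lambda>i. 1 / sqrt (real i))"
proof -
  define c where "c l = hw l \<bullet> (v 0 j - v_opt)" for l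
  have P_error: "proj_P *v (v i j - v_opt) = (\<Sum>l\<in>{1..r}. (c l * damping l i) *\<^sub>R u l)" for i
    unfolding proj_P_mv
  proof (rule sum.cong)
    fix l assume "l \<in> {1..r}"
    then have "l \<in> {1..CARD('n)}" using r_le_h h_le_n by auto
    then show "(hw l \<bullet> (v i j - v_opt)) *\<^sub>R u l = (c l * damping l i) *\<^sub>R u l"
      using hw_error_damping[OF _ j, of l i] by (simp add: c_def mult.commute)
  qed simp
  have "(\<lambda>i. norm ((c l * damping l i) *\<^sub>R u l)) \<in> O(\<lambda>i. 1 / sqrt (real i))"
    if "l \<in> {1..r}" for l
  proof -
    have "(\<lambda>i. norm ((c l * damping l i) *\<^sub>R u l)) \<in> O(damping l)"
      by (intro bigoI[of _ "\<bar>c l\<bar> * norm (u l)"]) (simp add: abs_mult mult_ac)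
    then show ?thesis using damping_bigo[OF that] by (rule landau_o.big_trans)
  qed
  then have "(\<lambda>i. \<Sum>l\<in>{1..r}. norm ((c l * damping l i) *\<^sub>R u l)) \<in> O(\<lambda>i. 1 / sqrt (real i))"
    by (rule big_sum_in_bigo)
  moreover have "(\<lambda>i. norm (proj_P *v (v i j - v_opt)))
      \<in> O(\<lambda>i. \<Sum>l\<in>{1..r}. norm ((c l * damping l i) *\<^sub>R u l))"
    by (intro landau_o.big_mono always_eventually allI)
      (simp add: P_error norm_sum sum_nonneg del: norm_scaleR)
  ultimately show ?thesis by (rule landau_o.big_trans[rotated])
qed

end

theorem theorem3p16:
  fixes H :: "real^'d^'n" and \<Sigma> :: "real^'n^'n" and y :: "real^'n"
    and J :: nat and v :: "nat \<Rightarrow> nat \<Rightarrow> real^'d"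
    and h r :: nat and w :: "nat \<Rightarrow> real^'n" and u :: "nat \<Rightarrow> real^'d" and \<delta> :: "nat \<Rightarrow> nat \<Rightarrow> real"
  assumes rankH: "rank H = h"
    and Sigma: "sym_posdef \<Sigma>"
    and J2: "J \<ge> 2"
    and EKI: "\<And>i j. j \<in> {1..J} \<Longrightarrow>
       v (Suc i) j = v i j + (emp_cov J (v i) ** transpose H **
          matrix_inv (H ** emp_cov J (v i) ** transpose H + \<Sigma>)) *v (y - H *v v i j)"
    \<comment> \<open>the Sigma-orthonormal simultaneous generalized eigenbasis w_1..w_n\<close>
    and orth: "\<And>k l. k \<in> {1..CARD('n)} \<Longrightarrow> l \<in> {1..CARD('n)} \<Longrightarrow>
       w k \<bullet> (\<Sigma> *v w l) = (if k = l then 1 else 0)"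
    and eig: "\<And>l i. l \<in> {1..CARD('n)} \<Longrightarrow>
       (H ** emp_cov J (v i) ** transpose H) *v w l = \<delta> l i *\<^sub>R (\<Sigma> *v w l)"
    and rh: "r \<le> h"
    and pos: "\<And>l. l \<in> {1..r} \<Longrightarrow>
       w l \<in> range (\<lambda>x. matrix_inv \<Sigma> *v (H *v x)) \<and> \<delta> l 0 > 0"
    and zero: "\<And>l. l \<in> {r+1..h} \<Longrightarrow>
       w l \<in> range (\<lambda>x. matrix_inv \<Sigma> *v (H *v x)) \<and> \<delta> l 0 = 0"
    and ker: "span (w ` {h+1..CARD('n)}) = {x. transpose H *v x = 0}"
    and kerin: "\<And>l. l \<in> {h+1..CARD('n)} \<Longrightarrow> transpose H *v w l = 0"
    and u_def: "\<And>l. u l = (if l \<le> r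
                 then (1 / \<delta> l 0) *\<^sub>R ((emp_cov J (v 0) ** transpose H) *v w l)
                 else Hplus H \<Sigma> *v (\<Sigma> *v w l))"
    and rpos: "r = card {l \<in> {1..CARD('n)}. \<delta> l 0 > 0}"
  defines "P \<equiv> (\<Sum>l\<in>{1..r}. outer (u l) (u l)) ** (transpose H ** matrix_inv \<Sigma> ** H)"
    and "Q \<equiv> (\<Sum>l\<in>{r+1..h}. outer (u l) (u l)) ** (transpose H ** matrix_inv \<Sigma> ** H)"
    and "vstar \<equiv> pinv (transpose H ** matrix_inv \<Sigma> ** H) *v (transpose H *v (matrix_inv \<Sigma> *v y))"
  shows "\<forall>j\<in>{1..J}.
           (\<lambda>i. norm (P *v (v i j - vstar))) \<in> O(\<lambda>i. 1 / sqrt (real i)) \<and>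
           (\<forall>i. Q *v (v i j - vstar) = Q *v (v 0 j - vstar)) \<and>
           (\<forall>i. (mat 1 - P - Q) *v (v i j - vstar) = (mat 1 - P - Q) *v (v 0 j - vstar))"
proof -
  interpret eki_linear H \<Sigma> y J v h r w u \<delta>
    using Sigma EKI orth eig rh pos zero kerin u_def rank_bound[of H] rankH
    by unfold_locales auto
  have "P = proj_P" "Q = proj_Q" "vstar = v_opt"
    unfolding P_def Q_def vstar_def proj_P_def proj_Q_def v_opt_def gram_def by simp_all
  then show ?thesis
    using proj_P_error_bigo proj_Q_error_invariant proj_N_error_invariant by blast
qed

end
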